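(* Let $\mathbb{X},\mathbb{Y}$ be finite-dimensional real polyhedral Banach spaces and let $T\in\mathbb{L}(\mathbb{X},\mathbb{Y})$ be a bijective operator that preserves parallel pairs (equivalently, TEA pairs). Then: (i) $|\mathrm{Ext}\,B_{\mathbb{X}^*}|\ge|\mathrm{Ext}\,B_{\mathbb{Y}^*}|$; (ii) $|\mathrm{Ext}\,B_{\mathbb{X}^*}|=|\mathrm{Ext}\,B_{\mathbb{Y}^*}|$ if and only if for any two distinct $f_1,f_2\in\mathrm{Ext}\,B_{\mathbb{X}^*}$ there exist two distinct $g_1,g_2\in\mathrm{Ext}\,B_{\mathbb{Y}^*}$ such that $T(\mathrm{Sm}(f_1))\subset\mathrm{Sm}(g_1)$ and $T(\mathrm{Sm}(f_2))\subset\mathrm{Sm}(g_2)$.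
   Context: A finite-dimensional Banach space is polyhedral if its unit ball has finitely many extreme points. $\mathrm{Ext}\,B_{\mathbb{X}^*}$ is the (finite) set of extreme points of the dual unit ball. For non-zero $x$, $J(x)=\{f\in S_{\mathbb{X}^*}: f(x)=\|x\|\}$; for $f\in\mathrm{Ext}\,B_{\mathbb{X}^*}$, $\mathrm{Sm}(f)=\{x\in\mathbb{X}: J(x)=\{f\}\}$. $(x,y)$ is a parallel pair if $\|x+\lambda y\|=\|x\|+\|y\|$ for some $\lambda$ with $|\lambda|=1$; a TEA pair if $\|x+y\|=\|x\|+\|y\|$. $T$ preserves parallel pairs if $(x,y)$ parallel in $\mathbb{X}$ implies $(Tx,Ty)$ parallel in $\mathbb{Y}$. *)

theory Defs
  imports "HOL-Analysis.Analysis"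
begin

text \<open>A finite-dimensional real normed space is modelled as a Euclidean-space type
  'a (providing the finite-dimensional real vector space structure) together with an
  arbitrary norm N on it. The dual space is identified with 'a via u |-> (\<lambda>x. x \<bullet> u).\<close>

definition is_norm :: "('a::real_vector \<Rightarrow> real) \<Rightarrow> bool" where
  "is_norm N \<longleftrightarrow> (\<forall>x. 0 \<le> N x) \<and> (\<forall>x. N x = 0 \<longleftrightarrow> x = 0)
     \<and> (\<forall>c x. N (c *\<^sub>R x) = \<bar>c\<bar> * N x) \<and> (\<forall>x y. N (x + y) \<le> N x + N y)"

definition dual_norm :: "('a::euclidean_space \<Rightarrow> real) \<Rightarrow> 'a \<Rightarrow> real" where
  "dual_norm N u = (SUP x\<in>{x. N x \<le> 1}. x \<bullet> u)"

definition unit_ball :: "('a::real_vector \<Rightarrow> real) \<Rightarrow> 'a set" where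
  "unit_ball N = {x. N x \<le> 1}"

definition polyhedral :: "('a::real_vector \<Rightarrow> real) \<Rightarrow> bool" where
  "polyhedral N \<longleftrightarrow> finite {x. x extreme_point_of unit_ball N}"

definition ExtDual :: "('a::euclidean_space \<Rightarrow> real) \<Rightarrow> 'a set" where
  "ExtDual N = {u. u extreme_point_of unit_ball (dual_norm N)}"

definition Jset :: "('a::euclidean_space \<Rightarrow> real) \<Rightarrow> 'a \<Rightarrow> 'a set" where
  "Jset N x = {u. dual_norm N u = 1 \<and> x \<bullet> u = N x}"

definition Sm :: "('a::euclidean_space \<Rightarrow> real) \<Rightarrow> 'a \<Rightarrow> 'a set" where
  "Sm N f = {x. x \<noteq> 0 \<and> Jset N x = {f}}"

definition parallel_pair :: "('a::real_vector \<Rightarrow> real) \<Rightarrow> 'a \<Rightarrow> 'a \<Rightarrow> bool" where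
  "parallel_pair N x y \<longleftrightarrow> (\<exists>l::real. \<bar>l\<bar> = 1 \<and> N (x + l *\<^sub>R y) = N x + N y)"

end

theory Submission
  imports Defs
begin

(* For a polyhedral norm N, N x is the maximum of x \<bullet> e over the finite set Ext of extreme
   points of the dual ball, and Sm f is the open convex cone on which f is the unique maximiser.
   Two points of one cone Sm f form a parallel pair; if T sent them into different cones Sm g1 and
   Sm g2, parallelism of the images forces g1 to take the value -N(T x2) at T x2. Perturbing a point
   of Sm f towards preimages of Sm g1 and Sm g2 then shows that T maps smooth points to smooth
   points, and connectedness of segments in Sm f shows that all of Sm f lands in a single cone
   Sm g. Since T is onto and the cones are open, f \<mapsto> g is a surjection from Ext B_X* onto
   Ext B_Y*, and both claims are statements about this surjection. *)

lemma eventually_add_scaleR_in_open: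
  fixes x z :: "'a::real_normed_vector"
  assumes "open U" "x \<in> U"
  shows "\<forall>\<^sub>F t in at_right 0. x + t *\<^sub>R z \<in> U"
proof -
  have "((\<lambda>t. x + t *\<^sub>R z) \<longlongrightarrow> x + 0 *\<^sub>R z) (at_right 0)"
    by (intro tendsto_intros)
  then show ?thesis
    using assms by (simp add: topological_tendstoD)
qed

lemma ex_pos_if_eventually_at_right:
  assumes "\<forall>\<^sub>F t in at_right (0::real). P t"
  obtains t where "t > 0" "P t"
  using eventually_happens'[OF trivial_limit_at_right_real
      eventually_conj[OF eventually_at_right_less assms]] by blast

locale finite_dim_norm =
  fixes N :: "'a::euclidean_space \<Rightarrow> real"
  assumes is_norm: "is_norm N"
begin

lemma nonneg: "0 \<le> N x"
  and zero_iff: "N x = 0 \<longleftrightarrow> x = 0"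
  and scaleR: "N (c *\<^sub>R x) = \<bar>c\<bar> * N x"
  and triangle: "N (x + y) \<le> N x + N y"
  using is_norm by (simp_all add: is_norm_def)

lemma zero [simp]: "N 0 = 0"
  by (simp add: zero_iff)

lemma abs [simp]: "\<bar>N x\<bar> = N x"
  using nonneg by simp

lemma pos: "x \<noteq> 0 \<Longrightarrow> 0 < N x"
  using nonneg zero_iff by (simp add: order_less_le)

lemma uminus: "N (- x) = N x"
  using scaleR[of "-1" x] by simp

lemma convex_on: "convex_on UNIV N"
proof (rule convex_onI)
  fix t :: real and x y :: 'a
  assume "0 < t" "t < 1"
  then show "N ((1 - t) *\<^sub>R x + t *\<^sub>R y) \<le> (1 - t) * N x + t * N y"
    using triangle[of "(1 - t) *\<^sub>R x" "t *\<^sub>R y"] by (simp add: scaleR)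
qed simp

lemma continuous_on: "continuous_on UNIV N"
  by (rule convex_on_continuous[OF open_UNIV convex_on])

lemma equivalent_to_norm:
  obtains c C where "0 < c" "0 < C" "\<And>x. c * norm x \<le> N x" "\<And>x. N x \<le> C * norm x"
proof -
  obtain b :: 'a where "b \<in> Basis" using nonempty_Basis by blast
  then have sphere_ne: "sphere (0::'a) 1 \<noteq> {}"
    by (metis ex_in_conv mem_sphere_0 norm_Basis)
  have cont: "continuous_on (sphere 0 1) N"
    using continuous_on continuous_on_subset by blast
  obtain m where m: "m \<in> sphere 0 1" "\<And>y. y \<in> sphere 0 1 \<Longrightarrow> N m \<le> N y"
    using continuous_attains_inf[OF compact_sphere sphere_ne cont] by blast
  obtain M where M: "\<And>y. y \<in> sphere 0 1 \<Longrightarrow> N y \<le> N M"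
    using continuous_attains_sup[OF compact_sphere sphere_ne cont] by blast
  have "N m * norm x \<le> N x \<and> N x \<le> N M * norm x" for x
  proof (cases "x = 0")
    case False
    then have "(1 / norm x) *\<^sub>R x \<in> sphere 0 1" by simp
    moreover have "N ((1 / norm x) *\<^sub>R x) = N x / norm x" by (simp add: scaleR)
    ultimately have "N m \<le> N x / norm x" "N x / norm x \<le> N M"
      using m(2) M by metis+
    then show ?thesis using False by (simp add: field_simps)
  qed simp
  moreover have "0 < N m" using m(1) by (intro pos) auto
  moreover have "N m \<le> N M" using m M by blast
  ultimately show thesis using that[of "N m" "N M"] by fastforce
qed

abbreviation "B \<equiv> unit_ball N"
abbreviation "B' \<equiv> unit_ball (dual_norm N)"

lemma compact_unit_ball: "compact B"
proof -
  obtain c where c: "0 < c" "\<And>x. c * norm x \<le> N x" using equivalent_to_norm by metis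
  have "norm x \<le> 1 / c" if "N x \<le> 1" for x
    using c(2)[of x] that c(1) by (simp add: field_simps)
  then have "B \<subseteq> cball 0 (1 / c)" by (auto simp: unit_ball_def)
  moreover have "closed B"
    unfolding unit_ball_def by (intro closed_Collect_le continuous_on continuous_on_const)
  ultimately show ?thesis
    by (meson bounded_cball bounded_subset compact_eq_bounded_closed)
qed

lemma convex_unit_ball: "convex B"
proof (rule convexI)
  fix x y :: 'a and u v :: real
  assume "x \<in> B" "y \<in> B" "0 \<le> u" "0 \<le> v" "u + v = 1"
  then have "u * N x + v * N y \<le> 1"
    by (metis convex_bound_le unit_ball_def mem_Collect_eq)
  then show "u *\<^sub>R x + v *\<^sub>R y \<in> B"
    using triangle[of "u *\<^sub>R x" "v *\<^sub>R y"] \<open>0 \<le> u\<close> \<open>0 \<le> v\<close>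
    by (simp add: unit_ball_def scaleR)
qed

lemma zero_in_interior_unit_ball: "0 \<in> interior B"
proof -
  have "open {x. N x < 1}"
    by (intro open_Collect_less continuous_on continuous_on_const)
  moreover have "{x. N x < 1} \<subseteq> B" by (auto simp: unit_ball_def)
  moreover have "0 \<in> {x. N x < 1}" by simp
  ultimately show ?thesis by (meson interior_maximal subsetD)
qed

lemma bdd_above_inner_unit_ball: "bdd_above ((\<lambda>x. x \<bullet> u) ` B)"
  by (intro bounded_inner_imp_bdd_above compact_imp_bounded compact_unit_ball)

lemma dual_norm_le_iff: "dual_norm N u \<le> r \<longleftrightarrow> (\<forall>x. N x \<le> 1 \<longrightarrow> x \<bullet> u \<le> r)"
proof -
  have "0 \<in> B" by (simp add: unit_ball_def)
  then have "B \<noteq> {}" by blast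
  then show ?thesis
    unfolding dual_norm_def unit_ball_def[symmetric]
    by (subst cSUP_le_iff[OF _ bdd_above_inner_unit_ball]) (auto simp: unit_ball_def)
qed

lemma inner_le_dual_norm: "N x \<le> 1 \<Longrightarrow> x \<bullet> u \<le> dual_norm N u"
  unfolding dual_norm_def unit_ball_def[symmetric]
  by (rule cSUP_upper[OF _ bdd_above_inner_unit_ball]) (simp add: unit_ball_def)

lemma dual_ball_iff: "u \<in> B' \<longleftrightarrow> (\<forall>x. x \<bullet> u \<le> N x)"
proof
  assume u: "u \<in> B'"
  show "\<forall>x. x \<bullet> u \<le> N x"
  proof
    fix x :: 'a
    show "x \<bullet> u \<le> N x"
    proof (cases "x = 0")
      case False
      then have "N ((1 / N x) *\<^sub>R x) \<le> 1" by (simp add: scaleR pos)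
      then have "((1 / N x) *\<^sub>R x) \<bullet> u \<le> 1"
        using u unfolding unit_ball_def dual_norm_le_iff mem_Collect_eq by blast
      then show ?thesis using pos[OF False] by (simp add: field_simps)
    qed simp
  qed
qed (auto simp: unit_ball_def dual_norm_le_iff intro: order_trans)

lemma bounded_dual_ball: "bounded B'"
proof -
  obtain C where C: "0 < C" "\<And>x. N x \<le> C * norm x" using equivalent_to_norm by metis
  have "norm u \<le> C" if "u \<in> B'" for u
  proof -
    have "norm u * norm u = u \<bullet> u" by (simp add: power2_norm_eq_inner[symmetric] power2_eq_square)
    also have "\<dots> \<le> N u" using dual_ball_iff that by blast
    finally have "norm u * norm u \<le> C * norm u" using C(2)[of u] by linarith
    then show ?thesis
      by (cases "u = 0") (use C(1) in auto)
  qed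
  then show ?thesis unfolding bounded_iff by blast
qed

lemma interior_unit_ball_less: "p \<in> interior B \<Longrightarrow> N p < 1"
proof (rule ccontr)
  assume "p \<in> interior B" "\<not> N p < 1"
  then obtain t where "t > 0" "p + t *\<^sub>R p \<in> interior B"
    by (metis open_interior eventually_add_scaleR_in_open ex_pos_if_eventually_at_right)
  then have "N ((1 + t) *\<^sub>R p) \<le> 1"
    using interior_subset by (force simp: unit_ball_def algebra_simps)
  then have "(1 + t) * N p \<le> 1" unfolding scaleR using \<open>t > 0\<close> by simp
  moreover have "(1 + t) * 1 \<le> (1 + t) * N p"
    using \<open>t > 0\<close> \<open>\<not> N p < 1\<close> by (intro mult_left_mono) auto
  ultimately have "1 + t \<le> 1" by simp
  then show False using \<open>t > 0\<close> by simp
qed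

(* A supporting hyperplane to B at the boundary point x / N x. *)
lemma norming_functional_exists: "\<exists>u\<in>B'. x \<bullet> u = N x"
proof (cases "x = 0")
  case True
  have "0 \<in> B'" by (simp add: dual_ball_iff nonneg)
  then show ?thesis using True by auto
next
  case False
  define p where "p = (1 / N x) *\<^sub>R x"
  have Np: "N p = 1" using False by (simp add: p_def scaleR zero_iff)
  have "p \<notin> interior B" using Np interior_unit_ball_less by force
  then have "p \<notin> rel_interior B"
    using rel_interior_nonempty_interior zero_in_interior_unit_ball by blast
  moreover have "p \<in> B" using Np by (simp add: unit_ball_def)
  ultimately obtain a where a: "a \<noteq> 0" "\<And>y. y \<in> B \<Longrightarrow> a \<bullet> p \<le> a \<bullet> y"
    using supporting_hyperplane_rel_boundary[OF convex_unit_ball] by metis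
  obtain t where t: "t > 0" "0 + t *\<^sub>R (- a) \<in> interior B"
    by (metis open_interior zero_in_interior_unit_ball eventually_add_scaleR_in_open
        ex_pos_if_eventually_at_right)
  have "0 < t * (a \<bullet> a)" using t(1) a(1) by simp
  also have "\<dots> \<le> - (a \<bullet> p)"
    using a(2)[of "t *\<^sub>R (- a)"] t(2) interior_subset by fastforce
  finally have pa: "0 < - (a \<bullet> p)" .
  define u where "u = (1 / - (a \<bullet> p)) *\<^sub>R (- a)"
  have "u \<in> B'"
    unfolding unit_ball_def dual_norm_le_iff mem_Collect_eq
  proof (intro allI impI)
    fix y :: 'a assume "N y \<le> 1"
    then have "a \<bullet> p \<le> a \<bullet> y" using a(2) by (simp add: unit_ball_def)
    then show "y \<bullet> u \<le> 1" using pa by (simp add: u_def field_simps inner_commute)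
  qed
  moreover have "x \<bullet> u = N x"
    using pa pos[OF False] by (simp add: u_def p_def field_simps inner_commute)
  ultimately show ?thesis by blast
qed

lemma Jset_eq: "x \<noteq> 0 \<Longrightarrow> Jset N x = B' \<inter> {u. x \<bullet> u = N x}"
proof (intro set_eqI iffI)
  fix u assume "x \<noteq> 0" and u: "u \<in> B' \<inter> {u. x \<bullet> u = N x}"
  then have "((1 / N x) *\<^sub>R x) \<bullet> u = 1" by (simp add: zero_iff)
  moreover have "((1 / N x) *\<^sub>R x) \<bullet> u \<le> dual_norm N u"
    using \<open>x \<noteq> 0\<close> by (intro inner_le_dual_norm) (simp add: scaleR zero_iff)
  ultimately show "u \<in> Jset N x"
    using u by (simp add: Jset_def unit_ball_def)
qed (simp add: Jset_def unit_ball_def)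

lemma parallel_pair_if_Sm:
  assumes "x \<in> Sm N f" "y \<in> Sm N f"
  shows "parallel_pair N x y"
proof -
  have "f \<in> B'" "x \<bullet> f = N x" "y \<bullet> f = N y"
    using assms by (auto simp: Sm_def Jset_def unit_ball_def)
  then have "N x + N y \<le> N (x + y)"
    using dual_ball_iff inner_add_left by metis
  then show ?thesis
    using triangle[of x y] unfolding parallel_pair_def by (intro exI[of _ 1]) simp
qed

end

lemma Sm_unique: "x \<in> Sm N f \<Longrightarrow> x \<in> Sm N g \<Longrightarrow> f = g"
  by (simp add: Sm_def)

locale polyhedral_norm = finite_dim_norm +
  assumes polyhedral: "polyhedral N"
begin

abbreviation "E \<equiv> ExtDual N"

lemma dual_ball_eq_Inter: "B' = (\<Inter>v\<in>{v. v extreme_point_of B}. {u. v \<bullet> u \<le> 1})"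
proof -
  have hull: "B = convex hull {v. v extreme_point_of B}"
    by (rule Krein_Milman_Minkowski[OF compact_unit_ball convex_unit_ball])
  have "u \<in> B' \<longleftrightarrow> (\<forall>v. v extreme_point_of B \<longrightarrow> v \<bullet> u \<le> 1)" for u
  proof -
    have "(\<forall>x\<in>B. x \<bullet> u \<le> 1) \<longleftrightarrow> (\<forall>v. v extreme_point_of B \<longrightarrow> v \<bullet> u \<le> 1)"
    proof
      assume "\<forall>v. v extreme_point_of B \<longrightarrow> v \<bullet> u \<le> 1"
      then have "convex hull {v. v extreme_point_of B} \<subseteq> {x. u \<bullet> x \<le> 1}"
        by (intro hull_minimal convex_halfspace_le) (auto simp: inner_commute)
      then show "\<forall>x\<in>B. x \<bullet> u \<le> 1" using hull by (auto simp: inner_commute)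
    qed (auto simp: extreme_point_of_def)
    then show ?thesis by (simp add: unit_ball_def dual_norm_le_iff)
  qed
  then show ?thesis by blast
qed

lemma polyhedron_dual_ball: "polyhedron B'"
  using polyhedral unfolding dual_ball_eq_Inter polyhedral_def
  by (intro polyhedron_Inter) (auto simp: polyhedron_halfspace_le)

lemma compact_dual_ball: "compact B'"
  using bounded_dual_ball polyhedron_imp_closed[OF polyhedron_dual_ball]
  by (simp add: compact_eq_bounded_closed)

lemma finite_ExtDual: "finite E"
  unfolding ExtDual_def by (rule finite_polyhedron_extreme_points[OF polyhedron_dual_ball])

lemma ExtDual_inner_le: "e \<in> E \<Longrightarrow> x \<bullet> e \<le> N x"
  using dual_ball_iff by (auto simp: ExtDual_def extreme_point_of_def)

lemma norming_face_eq_hull: "B' \<inter> {u. x \<bullet> u = N x} = convex hull {e\<in>E. x \<bullet> e = N x}"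
proof -
  let ?F = "B' \<inter> {u. x \<bullet> u = N x}"
  have face: "?F face_of B'"
    using dual_ball_iff by (intro face_of_Int_supporting_hyperplane_le polyhedron_imp_convex
        polyhedron_dual_ball) blast
  have convex: "convex B'" by (rule polyhedron_imp_convex[OF polyhedron_dual_ball])
  have "?F = convex hull {v. v extreme_point_of ?F}"
    using face_of_imp_compact[OF convex compact_dual_ball face] face_of_imp_convex[OF face]
    by (rule Krein_Milman_Minkowski)
  also have "{v. v extreme_point_of ?F} = {e\<in>E. x \<bullet> e = N x}"
    unfolding extreme_point_of_face[OF face] ExtDual_def by (auto simp: extreme_point_of_def)
  finally show ?thesis .
qed

lemma ex_norming_ExtDual: "\<exists>e\<in>E. x \<bullet> e = N x"
proof -
  have "B' \<inter> {u. x \<bullet> u = N x} \<noteq> {}" using norming_functional_exists by blast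
  then show ?thesis unfolding norming_face_eq_hull convex_hull_eq_empty by blast
qed

lemma Sm_iff: "x \<in> Sm N f \<longleftrightarrow> x \<noteq> 0 \<and> {e\<in>E. x \<bullet> e = N x} = {f}"
proof -
  have hull_eq_singleton: "convex hull S = {f} \<longleftrightarrow> S = {f}" for S :: "'a set"
    using hull_subset[of S convex] convex_hull_eq_empty[of S] by fastforce
  show ?thesis
  proof (cases "x = 0")
    case False
    then show ?thesis
      by (simp add: Sm_def Jset_eq norming_face_eq_hull hull_eq_singleton)
  qed (simp add: Sm_def)
qed

(* Excludes x = 0 from the description of Sm f by strict inequalities in Sm_eq. *)
lemma ex_ExtDual_neq: "\<exists>e\<in>E. e \<noteq> f"
proof (rule ccontr)
  assume "\<not> ?thesis"
  then have "B' \<subseteq> {f}"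
    using Krein_Milman_Minkowski[OF compact_dual_ball polyhedron_imp_convex[OF polyhedron_dual_ball]]
    by (metis ExtDual_def convex_hull_singleton hull_mono singletonI subsetI)
  obtain b :: 'a where "b \<in> Basis" using nonempty_Basis by blast
  then have "0 < N b" by (intro pos) auto
  obtain u where u: "u \<in> B'" "b \<bullet> u = N b" using norming_functional_exists by blast
  have "- u \<in> B'" using u(1) by (simp add: dual_ball_iff) (metis inner_minus_left uminus)
  then have "u = - u" using u(1) \<open>B' \<subseteq> {f}\<close> by blast
  then have "u = 0" by (simp add: eq_neg_iff_add_eq_0 flip: scaleR_2)
  then show False using u(2) \<open>0 < N b\<close> by simp
qed

lemma Sm_eq: "f \<in> E \<Longrightarrow> Sm N f = {x. \<forall>e\<in>E. e \<noteq> f \<longrightarrow> x \<bullet> e < x \<bullet> f}"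
proof (intro set_eqI iffI)
  fix x assume "x \<in> Sm N f"
  then have norming: "{e\<in>E. x \<bullet> e = N x} = {f}" by (simp add: Sm_iff)
  have "x \<bullet> e < x \<bullet> f" if "e \<in> E" "e \<noteq> f" for e
  proof -
    have "x \<bullet> e \<le> N x" "x \<bullet> e \<noteq> N x" "x \<bullet> f = N x"
      using ExtDual_inner_le[OF that(1)] norming that by blast+
    then show ?thesis by simp
  qed
  then show "x \<in> {x. \<forall>e\<in>E. e \<noteq> f \<longrightarrow> x \<bullet> e < x \<bullet> f}" by blast
next
  fix x assume f: "f \<in> E" and strict: "x \<in> {x. \<forall>e\<in>E. e \<noteq> f \<longrightarrow> x \<bullet> e < x \<bullet> f}"
  obtain e0 where "e0 \<in> E" "x \<bullet> e0 = N x" using ex_norming_ExtDual by blast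
  then have xf: "x \<bullet> f = N x"
    using strict ExtDual_inner_le[OF f, of x] by (cases "e0 = f") force+
  then have "{e\<in>E. x \<bullet> e = N x} = {f}" using f strict by force
  moreover have "x \<noteq> 0" using ex_ExtDual_neq[of f] strict by force
  ultimately show "x \<in> Sm N f" by (simp add: Sm_iff)
qed

lemma Sm_eq_Inter: "f \<in> E \<Longrightarrow> Sm N f = (\<Inter>e\<in>E - {f}. {x. (e - f) \<bullet> x < 0})"
proof -
  have "(e - f) \<bullet> x = x \<bullet> e - x \<bullet> f" for e x by (metis inner_commute inner_diff_right)
  then show "f \<in> E \<Longrightarrow> ?thesis" by (auto simp: Sm_eq)
qed

lemma open_Sm: "f \<in> E \<Longrightarrow> open (Sm N f)"
  by (simp add: Sm_eq_Inter open_INT finite_ExtDual open_halfspace_lt)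

lemma convex_Sm: "f \<in> E \<Longrightarrow> convex (Sm N f)"
  by (simp add: Sm_eq_Inter convex_INT convex_halfspace_lt)

lemma Sm_nonempty: "f \<in> E \<Longrightarrow> Sm N f \<noteq> {}"
proof -
  assume f: "f \<in> E"
  then have "{f} exposed_face_of B'"
    by (simp add: exposed_face_of_polyhedron[OF polyhedron_dual_ball] face_of_singleton ExtDual_def)
  then obtain a b where ab: "B' \<subseteq> {u. a \<bullet> u \<le> b}" "{f} = B' \<inter> {u. a \<bullet> u = b}"
    unfolding exposed_face_of_def by blast
  have "a \<bullet> e < a \<bullet> f" if "e \<in> E" "e \<noteq> f" for e
  proof -
    have "e \<in> B'" using that(1) by (simp add: ExtDual_def extreme_point_of_def)
    then have "a \<bullet> e \<le> b" "a \<bullet> e \<noteq> b" "a \<bullet> f = b" using ab that(2) by blast+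
    then show ?thesis by simp
  qed
  then have "a \<in> Sm N f" using f by (simp add: Sm_eq)
  then show ?thesis by blast
qed

lemma add_scaleR_in_Sm:
  assumes "f \<in> E" "x \<bullet> f = N x" "z \<in> Sm N f" "0 < t"
  shows "x + t *\<^sub>R z \<in> Sm N f"
proof -
  have "x \<bullet> e + t * (z \<bullet> e) < x \<bullet> f + t * (z \<bullet> f)" if "e \<in> E" "e \<noteq> f" for e
    using ExtDual_inner_le[OF that(1), of x] assms that
    by (intro add_le_less_mono mult_strict_left_mono) (auto simp: Sm_eq)
  then show ?thesis using assms(1) by (simp add: Sm_eq inner_add_left)
qed

lemma norming_ExtDual_unique: "x \<in> Sm N f \<Longrightarrow> e \<in> E \<Longrightarrow> x \<bullet> e = N x \<Longrightarrow> e = f"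
  by (auto simp: Sm_iff)

lemma common_norming_if_norm_add_eq:
  assumes "N (x + y) = N x + N y"
  obtains e where "e \<in> E" "x \<bullet> e = N x" "y \<bullet> e = N y"
proof -
  obtain e where e: "e \<in> E" "(x + y) \<bullet> e = N (x + y)" using ex_norming_ExtDual by blast
  then have "x \<bullet> e = N x" "y \<bullet> e = N y"
    using ExtDual_inner_le[OF e(1), of x] ExtDual_inner_le[OF e(1), of y] assms
    by (simp_all add: inner_add_left)
  then show thesis using that e(1) by blast
qed

end

locale parallel_preserving =
  X: polyhedral_norm NX + Y: polyhedral_norm NY
  for NX :: "'a::euclidean_space \<Rightarrow> real" and NY :: "'b::euclidean_space \<Rightarrow> real" +
  fixes T :: "'a \<Rightarrow> 'b"
  assumes linear: "linear T" and bij: "bij T"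
    and preserves_parallel: "\<And>x y. parallel_pair NX x y \<Longrightarrow> parallel_pair NY (T x) (T y)"
begin

lemma add_scaleR: "T (x + t *\<^sub>R z) = T x + t *\<^sub>R T z"
  using linear by (simp add: linear_add linear_scale)

lemma nonzero: "x \<noteq> 0 \<Longrightarrow> T x \<noteq> 0"
  using linear bij by (metis bij_is_inj injD linear_0)

lemma ex_preimage_Sm: "g \<in> Y.E \<Longrightarrow> \<exists>z. T z \<in> Sm NY g"
  using Y.Sm_nonempty bij by (metis bij_pointE ex_in_conv)

lemma image_Sm_opposite:
  assumes "x1 \<in> Sm NX f" "x2 \<in> Sm NX f" "T x1 \<in> Sm NY g1" "T x2 \<in> Sm NY g2" "g1 \<noteq> g2"
  shows "T x2 \<bullet> g1 = - NY (T x2)"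
proof -
  obtain l where l: "\<bar>l\<bar> = 1" "NY (T x1 + l *\<^sub>R T x2) = NY (T x1) + NY (T x2)"
    using preserves_parallel[OF X.parallel_pair_if_Sm[OF assms(1,2)]]
    unfolding parallel_pair_def by blast
  then have "NY (T x1 + l *\<^sub>R T x2) = NY (T x1) + NY (l *\<^sub>R T x2)" by (simp add: Y.scaleR)
  then obtain g where g: "g \<in> Y.E" "T x1 \<bullet> g = NY (T x1)" "(l *\<^sub>R T x2) \<bullet> g = NY (l *\<^sub>R T x2)"
    by (rule Y.common_norming_if_norm_add_eq)
  have "g = g1" by (rule Y.norming_ExtDual_unique[OF assms(3) g(1,2)])
  have "l \<noteq> 1"
  proof
    assume "l = 1"
    then have "T x2 \<bullet> g = NY (T x2)" using g(3) by simp
    then show False using Y.norming_ExtDual_unique[OF assms(4) g(1)] \<open>g = g1\<close> assms(5) by blast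
  qed
  then have "l = -1" using l(1) by linarith
  then show ?thesis using g(3) \<open>g = g1\<close> by (simp add: Y.uminus)
qed

lemma image_Sm_smooth:
  assumes f: "f \<in> X.E" and x: "x \<in> Sm NX f"
  shows "\<exists>g\<in>Y.E. T x \<in> Sm NY g"
proof (rule ccontr)
  assume not_smooth: "\<not> ?thesis"
  have "T x \<noteq> 0" using x nonzero by (simp add: Sm_def)
  obtain g1 where g1: "g1 \<in> Y.E" "T x \<bullet> g1 = NY (T x)" using Y.ex_norming_ExtDual by blast
  then obtain g2 where g2: "g2 \<in> Y.E" "T x \<bullet> g2 = NY (T x)" "g2 \<noteq> g1"
    using not_smooth \<open>T x \<noteq> 0\<close> by (auto simp: Y.Sm_iff)
  obtain z1 where z1: "T z1 \<in> Sm NY g1" using ex_preimage_Sm g1(1) by blast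
  obtain z2 where z2: "T z2 \<in> Sm NY g2" using ex_preimage_Sm g2(1) by blast
  obtain t1 where "t1 > 0" and x1: "x + t1 *\<^sub>R z1 \<in> Sm NX f"
    using eventually_add_scaleR_in_open[OF X.open_Sm[OF f] x]
    by (rule ex_pos_if_eventually_at_right)
  then have Tx1: "T (x + t1 *\<^sub>R z1) \<in> Sm NY g1"
    using Y.add_scaleR_in_Sm[OF g1 z1] by (simp add: add_scaleR)
  have g1_pos: "T x \<in> {y. g1 \<bullet> y > 0}"
    using g1(2) Y.pos[OF \<open>T x \<noteq> 0\<close>] by (simp add: inner_commute)
  obtain t2 where "t2 > 0" "x + t2 *\<^sub>R z2 \<in> Sm NX f \<and> T x + t2 *\<^sub>R T z2 \<in> {y. g1 \<bullet> y > 0}"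
    using eventually_conj[OF eventually_add_scaleR_in_open[OF X.open_Sm[OF f] x, of z2]
        eventually_add_scaleR_in_open[OF open_halfspace_gt g1_pos, of "T z2"]]
    by (rule ex_pos_if_eventually_at_right)
  then have x2: "x + t2 *\<^sub>R z2 \<in> Sm NX f" and Tx2_pos: "0 < T (x + t2 *\<^sub>R z2) \<bullet> g1"
    by (simp_all add: add_scaleR inner_commute)
  have Tx2: "T (x + t2 *\<^sub>R z2) \<in> Sm NY g2"
    using Y.add_scaleR_in_Sm[OF g2(1,2) z2 \<open>t2 > 0\<close>] by (simp add: add_scaleR)
  show False
    using image_Sm_opposite[OF x1 x2 Tx1 Tx2 g2(3)[symmetric]] Tx2_pos Y.nonneg[of "T (x + t2 *\<^sub>R z2)"]
    by linarith
qed

lemma image_Sm_subset: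
  assumes f: "f \<in> X.E"
  shows "\<exists>g\<in>Y.E. T ` Sm NX f \<subseteq> Sm NY g"
proof -
  obtain x0 where x0: "x0 \<in> Sm NX f" using X.Sm_nonempty[OF f] by blast
  then obtain g where g: "g \<in> Y.E" "T x0 \<in> Sm NY g" using image_Sm_smooth[OF f] by blast
  have "T x \<in> Sm NY g" if x: "x \<in> Sm NX f" for x
  proof (rule ccontr)
    assume "T x \<notin> Sm NY g"
    let ?S = "closed_segment (T x0) (T x)"
    let ?U = "Sm NY g" and ?V = "\<Union>h\<in>Y.E - {g}. Sm NY h"
    have segment: "closed_segment x0 x \<subseteq> Sm NX f"
      by (rule closed_segment_subset[OF x0 x X.convex_Sm[OF f]])
    have cover: "?S \<subseteq> ?U \<union> ?V"
    proof
      fix y assume "y \<in> ?S"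
      then obtain w where "w \<in> Sm NX f" "y = T w"
        using segment by (auto simp: closed_segment_linear_image[OF linear])
      then obtain h where "h \<in> Y.E" "y \<in> Sm NY h" using image_Sm_smooth[OF f] by blast
      then show "y \<in> ?U \<union> ?V" by (cases "h = g") auto
    qed
    have disjoint: "?U \<inter> ?V \<inter> ?S = {}" by (auto dest: Sm_unique)
    have "open ?U" "open ?V" using Y.open_Sm g(1) by auto
    then have "?U \<inter> ?S = {} \<or> ?V \<inter> ?S = {}"
      by (rule connectedD[OF connected_segment _ _ disjoint cover])
    moreover have "T x \<in> ?V"
      using image_Sm_smooth[OF f x] \<open>T x \<notin> Sm NY g\<close> by blast
    ultimately show False using g(2) by blast
  qed
  then show ?thesis using g(1) by blast
qed

lemma ex1_image_Sm_subset:
  assumes f: "f \<in> X.E"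
  shows "\<exists>!g. g \<in> Y.E \<and> T ` Sm NX f \<subseteq> Sm NY g"
proof -
  obtain g where g: "g \<in> Y.E" "T ` Sm NX f \<subseteq> Sm NY g" using image_Sm_subset[OF f] by blast
  obtain x where x: "x \<in> Sm NX f" using X.Sm_nonempty[OF f] by blast
  show ?thesis
  proof (rule ex1I[of _ g])
    fix g' assume "g' \<in> Y.E \<and> T ` Sm NX f \<subseteq> Sm NY g'"
    then have "T x \<in> Sm NY g'" "T x \<in> Sm NY g" using x g(2) by blast+
    then show "g' = g" by (rule Sm_unique)
  qed (use g in blast)
qed

lemma preimage_Sm_subset:
  assumes g: "g \<in> Y.E"
  shows "\<exists>f\<in>X.E. T ` Sm NX f \<subseteq> Sm NY g"
proof -
  obtain x where x: "T x \<in> Sm NY g" using ex_preimage_Sm[OF g] by blast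
  obtain f where f: "f \<in> X.E" "x \<bullet> f = NX x" using X.ex_norming_ExtDual by blast
  obtain g' where g': "T ` Sm NX f \<subseteq> Sm NY g'" using image_Sm_subset[OF f(1)] by blast
  obtain z where z: "z \<in> Sm NX f" using X.Sm_nonempty[OF f(1)] by blast
  obtain t where "t > 0" and "T x + t *\<^sub>R T z \<in> Sm NY g"
    using eventually_add_scaleR_in_open[OF Y.open_Sm[OF g] x]
    by (rule ex_pos_if_eventually_at_right)
  then have "T (x + t *\<^sub>R z) \<in> Sm NY g" by (simp add: add_scaleR)
  moreover have "T (x + t *\<^sub>R z) \<in> Sm NY g'"
    using X.add_scaleR_in_Sm[OF f z \<open>t > 0\<close>] g' by blast
  ultimately have "g' = g" by (rule Sm_unique[rotated])
  then show ?thesis using f(1) g' by blast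
qed

end

lemma card_le_and_card_eq_iff_if_functional_onto:
  assumes "finite A"
    and functional: "\<And>a. a \<in> A \<Longrightarrow> \<exists>!b. b \<in> B \<and> R a b"
    and onto: "\<And>b. b \<in> B \<Longrightarrow> \<exists>a\<in>A. R a b"
  shows "card B \<le> card A \<and>
    (card A = card B \<longleftrightarrow>
      (\<forall>a1\<in>A. \<forall>a2\<in>A. a1 \<noteq> a2 \<longrightarrow> (\<exists>b1\<in>B. \<exists>b2\<in>B. b1 \<noteq> b2 \<and> R a1 b1 \<and> R a2 b2)))"
proof -
  define \<phi> where "\<phi> a = (THE b. b \<in> B \<and> R a b)" for a
  have \<phi>: "\<phi> a \<in> B \<and> R a (\<phi> a)" if "a \<in> A" for a
    unfolding \<phi>_def using theI'[OF functional[OF that]] .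
  have \<phi>_unique: "b = \<phi> a" if "a \<in> A" "b \<in> B" "R a b" for a b
    unfolding \<phi>_def using the1_equality[OF functional[OF that(1)]] that(2,3) by simp
  have image: "\<phi> ` A = B"
    using \<phi> onto \<phi>_unique by blast
  have "inj_on \<phi> A \<longleftrightarrow>
      (\<forall>a1\<in>A. \<forall>a2\<in>A. a1 \<noteq> a2 \<longrightarrow> (\<exists>b1\<in>B. \<exists>b2\<in>B. b1 \<noteq> b2 \<and> R a1 b1 \<and> R a2 b2))"
    unfolding inj_on_def using \<phi> \<phi>_unique by metis
  moreover have "inj_on \<phi> A \<longleftrightarrow> card A = card B"
    using card_image[of \<phi> A] eq_card_imp_inj_on[OF \<open>finite A\<close>] image by metis
  ultimately show ?thesis
    using card_image_le[OF \<open>finite A\<close>, of \<phi>] image by simp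
qed

theorem mainTheorem16:
  fixes NX :: "'a::euclidean_space \<Rightarrow> real" and NY :: "'b::euclidean_space \<Rightarrow> real"
    and T :: "'a \<Rightarrow> 'b"
  assumes "is_norm NX" and "is_norm NY"
    and "polyhedral NX" and "polyhedral NY"
    and "linear T" and "bij T"
    and "\<forall>x y. parallel_pair NX x y \<longrightarrow> parallel_pair NY (T x) (T y)"
  shows "card (ExtDual NX) \<ge> card (ExtDual NY) \<and>
    (card (ExtDual NX) = card (ExtDual NY) \<longleftrightarrow>
      (\<forall>f1\<in>ExtDual NX. \<forall>f2\<in>ExtDual NX. f1 \<noteq> f2 \<longrightarrow>
         (\<exists>g1\<in>ExtDual NY. \<exists>g2\<in>ExtDual NY. g1 \<noteq> g2 \<and>
            T ` Sm NX f1 \<subseteq> Sm NY g1 \<and> T ` Sm NX f2 \<subseteq> Sm NY g2)))"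
proof -
  interpret parallel_preserving NX NY T
    using assms by (simp add: parallel_preserving_def parallel_preserving_axioms_def
        polyhedral_norm_def polyhedral_norm_axioms_def finite_dim_norm_def)
  show ?thesis
    by (rule card_le_and_card_eq_iff_if_functional_onto[OF X.finite_ExtDual
          ex1_image_Sm_subset preimage_Sm_subset])
qed

end
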